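(* Let $n=2^k$ for some integer $k\ge1$. Let $V=\{v\in\{-1,1\}^n : v_1=1\}$, $P(V)=\{\sum_{v\in W}v : W\subseteq V\}$, $g(V)=\frac12\sum_{v\in V}v$, $\mathbf{1}=(1,\dots,1)\in\mathbb{R}^n$, $M=2^{n-2}-\frac12\binom{n-1}{n/2}+\frac12$, and $K_M=\{(x_1,\dots,x_n)\in\mathbb{R}^n : x_i\le M\ \forall i\}$. Then there exists $w\in\mathbb{Z}^n$ with $w_i\le 1$ for all $i$ such that \[0\in P(V)-g(V)-\tfrac12\binom{n-1}{n/2}\mathbf{1}+\tfrac12 w\subset K_M.\] *)

theory Defs
  imports Complex_Main
begin

text \<open>Vectors in R^n are represented as functions nat => real, coordinates 0..n-1
  (coordinate i corresponds to the paper's coordinate i+1), zero outside {0..<n}.\<close>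

definition Vset :: "nat \<Rightarrow> (nat \<Rightarrow> real) set" where
  "Vset n = {v. (\<forall>i<n. v i = 1 \<or> v i = -1) \<and> (\<forall>i. n \<le> i \<longrightarrow> v i = 0) \<and> v 0 = 1}"

definition Pset :: "nat \<Rightarrow> (nat \<Rightarrow> real) set" where
  "Pset n = {(\<lambda>i. \<Sum>v\<in>W. v i) | W. W \<subseteq> Vset n}"

definition gV :: "nat \<Rightarrow> nat \<Rightarrow> real" where
  "gV n = (\<lambda>i. (1/2) * (\<Sum>v\<in>Vset n. v i))"

definition Mval :: "nat \<Rightarrow> real" where
  "Mval n = 2 ^ (n - 2) - (1/2) * real ((n - 1) choose (n div 2)) + 1/2"

definition KM :: "nat \<Rightarrow> real \<Rightarrow> (nat \<Rightarrow> real) set" where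
  "KM n M = {x. \<forall>i<n. x i \<le> M}"

definition shifted :: "nat \<Rightarrow> (nat \<Rightarrow> int) \<Rightarrow> (nat \<Rightarrow> real) set" where
  "shifted n w = (\<lambda>x. \<lambda>i. if i < n then x i - gV n i - (1/2) * real ((n - 1) choose (n div 2))
                               + (1/2) * real_of_int (w i) else 0) ` Pset n"

end

theory Submission
  imports Defs "HOL-Number_Theory.Cong"
begin

(*
  Identify V with the subsets A of {..<N}, N = n - 1 = 2h + 1 (coordinate j + 1 of the vector
  is 1 iff j is in A), and let c = binom(N, h+1) = binom(N, h).  Requiring the subset sum of a
  family F to be the zero of the shifted set forces w = c + 2 g(V) - 2 sum F; all points of the
  shifted set then lie in K_M as soon as w <= 1, i.e. as soon as 2 |F| >= 2^N + c - 1 and every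
  element i has bias #{A in F. i in A} - #{A in F. i notin A} >= (c - 1) / 2.

  Such an F consists of all subsets of size > h, which have bias binom(2h, h) = (h+1) c / N at
  every i, together with ceil(m/2) whole orbits of h-subsets under rotation mod N.  Since h is
  a unit mod N, these orbits have N elements each and there are m = c / N of them, and an
  orbit has bias -1 at every i.
*)

section \<open>Rotations of subsets of the integers mod \<open>N\<close>\<close>

definition rotate_set :: "nat \<Rightarrow> nat \<Rightarrow> nat set \<Rightarrow> nat set" where
  "rotate_set N t A = (\<lambda>a. (a + t) mod N) ` A"

lemma rotate_set_rotate_set: "rotate_set N s (rotate_set N t A) = rotate_set N (t + s) A"
  unfolding rotate_set_def image_image by (simp add: mod_add_left_eq add.assoc)

lemma rotate_set_cancel:
  assumes "A \<subseteq> {..<N}" and "(t + s) mod N = 0"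
  shows "rotate_set N s (rotate_set N t A) = A"
proof -
  have "rotate_set N (t + s) A = rotate_set N 0 A"
    unfolding rotate_set_def using assms(2) by (simp add: mod_add_right_eq[of _ "t + s", symmetric])
  also have "\<dots> = A" unfolding rotate_set_def using assms(1) by (auto simp: subset_eq image_iff)
  finally show ?thesis by (simp add: rotate_set_rotate_set)
qed

lemma rotate_set_subset: "0 < N \<Longrightarrow> rotate_set N t A \<subseteq> {..<N}"
  unfolding rotate_set_def by auto

lemma inj_on_add_mod: "inj_on (\<lambda>a::nat. (a + t) mod N) {..<N}"
proof
  fix a b assume "a \<in> {..<N}" "b \<in> {..<N}" "(a + t) mod N = (b + t) mod N"
  then show "a = b"
    by (metis cong_add_rcancel_nat cong_def cong_less_modulus_unique_nat lessThan_iff)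
qed

lemma card_rotate_set: "A \<subseteq> {..<N} \<Longrightarrow> card (rotate_set N t A) = card A"
  unfolding rotate_set_def by (intro card_image inj_on_subset[OF inj_on_add_mod])

lemma sum_rotate_set_mod:
  assumes "A \<subseteq> {..<N}"
  shows "\<Sum>(rotate_set N t A) mod N = (\<Sum>A + card A * t) mod N"
proof -
  have "\<Sum>(rotate_set N t A) = (\<Sum>a\<in>A. (a + t) mod N)"
    unfolding rotate_set_def by (simp add: sum.reindex[OF inj_on_subset[OF inj_on_add_mod assms]])
  then have "\<Sum>(rotate_set N t A) mod N = (\<Sum>a\<in>A. a + t) mod N"
    by (simp add: mod_sum_eq)
  then show ?thesis by (simp add: sum.distrib)
qed

lemma add_mod_eq_iff:
  fixes a t i N :: nat
  assumes "a < N" "t < N" "i < N"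
  shows "(a + t) mod N = i \<longleftrightarrow> t = (i + N - a) mod N"
  using assms
  by (smt (verit, best) add.assoc add_diff_cancel_right' add_diff_inverse_nat less_irrefl_nat
      mod_add_right_eq mod_add_self1 mod_if order_less_imp_not_less trans_less_add2)

lemma card_rotate_set_containing:
  assumes A: "A \<subseteq> {..<N}" and i: "i < N"
  shows "card {t \<in> {..<N}. i \<in> rotate_set N t A} = card A"
proof -
  have "i \<in> rotate_set N t A \<longleftrightarrow> t \<in> (\<lambda>a. (i + N - a) mod N) ` A" if "t < N" for t
    unfolding rotate_set_def image_iff
  proof (rule bex_cong[OF refl])
    fix a assume "a \<in> A"
    then show "i = (a + t) mod N \<longleftrightarrow> t = (i + N - a) mod N"
      using A i that add_mod_eq_iff[of a N t i] by auto
  qed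
  moreover have "(\<lambda>a. (i + N - a) mod N) ` A \<subseteq> {..<N}" using i by auto
  ultimately have shifts: "{t \<in> {..<N}. i \<in> rotate_set N t A} = (\<lambda>a. (i + N - a) mod N) ` A"
    by auto
  have "inj_on (\<lambda>a. (i + N - a) mod N) A"
  proof
    fix a b assume ab: "a \<in> A" "b \<in> A" and eq: "(i + N - a) mod N = (i + N - b) mod N"
    define t where "t = (i + N - b) mod N"
    have "t < N" using i by (simp add: t_def)
    then have "(a + t) mod N = (b + t) mod N"
      using A ab i eq add_mod_eq_iff[of a N t i] add_mod_eq_iff[of b N t i] by (auto simp: t_def subset_eq)
    then show "a = b" using inj_on_add_mod A ab unfolding inj_on_def by blast
  qed
  then show ?thesis unfolding shifts by (rule card_image)
qed

lemma mult_mod_cancel: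
  fixes k N t s :: nat
  assumes "coprime k N" "t < N" "s < N" "(k * t) mod N = (k * s) mod N"
  shows "t = s"
proof -
  have "[k * t = k * s] (mod N)" using assms(4) by (simp add: cong_def)
  then have "[t = s] (mod N)" using cong_mult_lcancel_nat[OF assms(1)] by blast
  then show ?thesis using assms(2,3) by (rule cong_less_modulus_unique_nat)
qed

lemma exists_mult_mod_complement:
  fixes k N a :: nat
  assumes "coprime k N" "0 < N"
  shows "\<exists>s<N. (a + k * s) mod N = 0"
proof -
  obtain x where x: "[k * x = 1] (mod N)" using cong_solve_coprime_nat[OF assms(1)] by auto
  define y where "y = x * (N - a mod N)"
  have "[k * y = 1 * (N - a mod N)] (mod N)"
    unfolding y_def using cong_scalar_right[OF x] by (simp add: mult.assoc)
  then have "[a + k * y = a mod N + (N - a mod N)] (mod N)"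
    by (intro cong_add) (simp_all add: cong_def)
  also have "a mod N + (N - a mod N) = N" using assms(2) by simp
  finally have "(a + k * y) mod N = 0" by (simp add: cong_def)
  then have "(a + k * (y mod N)) mod N = 0" by (metis mod_add_right_eq mod_mult_right_eq)
  then show ?thesis using assms(2) by (intro exI[of _ "y mod N"]) simp
qed

definition zero_sum_subsets :: "nat \<Rightarrow> nat \<Rightarrow> nat set set" where
  "zero_sum_subsets N k = {A. A \<subseteq> {..<N} \<and> card A = k \<and> \<Sum>A mod N = 0}"

definition rotations :: "nat \<Rightarrow> nat set set \<Rightarrow> nat set set" where
  "rotations N R = (\<lambda>(A, t). rotate_set N t A) ` (R \<times> {..<N})"

lemma sum_rotate_zero_sum_subset:
  "A \<in> zero_sum_subsets N k \<Longrightarrow> \<Sum>(rotate_set N t A) mod N = (k * t) mod N"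
  unfolding zero_sum_subsets_def by (auto simp: sum_rotate_set_mod mod_add_left_eq mult.commute)

text \<open>Rotation by \<open>t\<close> adds \<open>k t\<close> to the sum of a \<open>k\<close>-set modulo \<open>N\<close>; as \<open>k\<close> is a unit
  mod \<open>N\<close>, every rotation orbit of \<open>k\<close>-sets has exactly \<open>N\<close> elements, exactly one of which
  has sum \<open>0\<close>.\<close>
lemma inj_on_rotate_zero_sum_subsets:
  assumes "coprime k N"
  shows "inj_on (\<lambda>(A, t). rotate_set N t A) (zero_sum_subsets N k \<times> {..<N})"
proof (rule inj_onI, clarify)
  fix A t B s
  assume A: "A \<in> zero_sum_subsets N k" "t < N" and B: "B \<in> zero_sum_subsets N k" "s < N"
    and eq: "rotate_set N t A = rotate_set N s B"
  have "(k * t) mod N = (k * s) mod N"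
    using eq sum_rotate_zero_sum_subset[OF A(1)] sum_rotate_zero_sum_subset[OF B(1)] by metis
  then have "t = s" using mult_mod_cancel[OF assms A(2) B(2)] by blast
  have "A = rotate_set N (N - t) (rotate_set N t A)"
    using A by (intro rotate_set_cancel[symmetric]) (auto simp: zero_sum_subsets_def)
  also have "\<dots> = rotate_set N (N - s) (rotate_set N s B)" using eq \<open>t = s\<close> by simp
  also have "\<dots> = B" using B by (intro rotate_set_cancel) (auto simp: zero_sum_subsets_def)
  finally show "A = B \<and> t = s" using \<open>t = s\<close> by simp
qed

lemma rotations_zero_sum_subsets:
  assumes "coprime k N" "0 < N"
  shows "rotations N (zero_sum_subsets N k) = {A. A \<subseteq> {..<N} \<and> card A = k}"
proof
  show "rotations N (zero_sum_subsets N k) \<subseteq> {A. A \<subseteq> {..<N} \<and> card A = k}"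
    unfolding rotations_def zero_sum_subsets_def
    using rotate_set_subset[OF assms(2)] card_rotate_set by auto
next
  show "{A. A \<subseteq> {..<N} \<and> card A = k} \<subseteq> rotations N (zero_sum_subsets N k)"
  proof
    fix B assume "B \<in> {A. A \<subseteq> {..<N} \<and> card A = k}"
    then have B: "B \<subseteq> {..<N}" "card B = k" by auto
    obtain s where s: "s < N" "(\<Sum>B + k * s) mod N = 0"
      using exists_mult_mod_complement[OF assms, of "\<Sum>B"] by auto
    define A where "A = rotate_set N s B"
    have "A \<subseteq> {..<N}" using assms(2) by (simp add: A_def rotate_set_subset)
    moreover have "card A = k" using B by (simp add: A_def card_rotate_set)
    moreover have "\<Sum>A mod N = 0" using sum_rotate_set_mod[OF B(1)] B(2) s(2) by (simp add: A_def)
    ultimately have "A \<in> zero_sum_subsets N k" by (simp add: zero_sum_subsets_def)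
    have "(s + (N - s) mod N) mod N = 0" using s(1) by (simp add: mod_add_right_eq)
    then have "rotate_set N ((N - s) mod N) A = B" unfolding A_def by (rule rotate_set_cancel[OF B(1)])
    moreover have "(N - s) mod N < N" using assms(2) by simp
    ultimately show "B \<in> rotations N (zero_sum_subsets N k)"
      unfolding rotations_def using \<open>A \<in> zero_sum_subsets N k\<close> by force
  qed
qed

lemma card_rotations:
  assumes "coprime k N" "R \<subseteq> zero_sum_subsets N k"
  shows "card (rotations N R) = N * card R"
proof -
  have "card (rotations N R) = card (R \<times> {..<N})"
    unfolding rotations_def
    using assms by (intro card_image inj_on_subset[OF inj_on_rotate_zero_sum_subsets]) auto
  then show ?thesis by (simp add: card_cartesian_product)
qed

lemma card_rotations_containing:
  assumes "coprime k N" "R \<subseteq> zero_sum_subsets N k" "i < N"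
  shows "card {B \<in> rotations N R. i \<in> B} = k * card R"
proof -
  have "finite R"
    using assms(2) by (rule finite_subset) (auto simp: zero_sum_subsets_def)
  let ?hits = "SIGMA A:R. {t \<in> {..<N}. i \<in> rotate_set N t A}"
  have "{B \<in> rotations N R. i \<in> B} = (\<lambda>(A, t). rotate_set N t A) ` ?hits"
    unfolding rotations_def by auto
  moreover have "inj_on (\<lambda>(A, t). rotate_set N t A) ?hits"
    using assms(2) by (intro inj_on_subset[OF inj_on_rotate_zero_sum_subsets[OF assms(1)]]) auto
  ultimately have "card {B \<in> rotations N R. i \<in> B} = card ?hits"
    by (simp add: card_image)
  also have "\<dots> = (\<Sum>A\<in>R. card {t \<in> {..<N}. i \<in> rotate_set N t A})"
    using \<open>finite R\<close> by (simp add: card_SigmaI)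
  also have "\<dots> = (\<Sum>A\<in>R. k)"
  proof (rule sum.cong)
    fix A assume "A \<in> R"
    then show "card {t \<in> {..<N}. i \<in> rotate_set N t A} = k"
      using assms(2,3) card_rotate_set_containing[of A N i] by (auto simp: zero_sum_subsets_def)
  qed simp
  finally show ?thesis by simp
qed

lemma binomial_eq_mult_card_zero_sum_subsets:
  assumes "coprime k N" "0 < N"
  shows "N choose k = N * card (zero_sum_subsets N k)"
proof -
  have "N choose k = card {A. A \<subseteq> {..<N} \<and> card A = k}" by (simp add: n_subsets)
  also have "\<dots> = N * card (zero_sum_subsets N k)"
    using card_rotations[OF assms(1) order_refl] rotations_zero_sum_subsets[OF assms] by simp
  finally show ?thesis .
qed

section \<open>Bias of families of subsets\<close>

definition bias :: "nat set set \<Rightarrow> nat \<Rightarrow> int" where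
  "bias F i = int (card {A \<in> F. i \<in> A}) - int (card {A \<in> F. i \<notin> A})"

lemma bias_Un:
  assumes "finite F" "finite G" "F \<inter> G = {}"
  shows "bias (F \<union> G) i = bias F i + bias G i"
proof -
  have "card {A \<in> F \<union> G. P A} = card {A \<in> F. P A} + card {A \<in> G. P A}" for P
    using assms by (subst card_Un_disjoint[symmetric]) (auto intro: arg_cong[where f = card])
  then show ?thesis unfolding bias_def by simp
qed

lemma bias_eq_card:
  assumes "finite F"
  shows "bias F i = 2 * int (card {A \<in> F. i \<in> A}) - int (card F)"
proof -
  have "card F = card {A \<in> F. i \<in> A} + card {A \<in> F. i \<notin> A}"
    using assms by (subst card_Un_disjoint[symmetric]) (auto intro: arg_cong[where f = card])
  then show ?thesis unfolding bias_def by simp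
qed

lemma card_Pow_containing:
  assumes "finite S" "i \<in> S"
  shows "card {A \<in> Pow S. i \<in> A \<and> P (card A)} =
         card {A \<in> Pow S. i \<notin> A \<and> P (Suc (card A))}"
proof (rule bij_betw_same_card[of "\<lambda>A. A - {i}"],
       rule bij_betw_byWitness[where f' = "insert i"])
  show "(\<lambda>A. A - {i}) ` {A \<in> Pow S. i \<in> A \<and> P (card A)} \<subseteq>
        {A \<in> Pow S. i \<notin> A \<and> P (Suc (card A))}"
  proof
    fix B assume "B \<in> (\<lambda>A. A - {i}) ` {A \<in> Pow S. i \<in> A \<and> P (card A)}"
    then obtain A where A: "A \<subseteq> S" "i \<in> A" "P (card A)" and B: "B = A - {i}" by auto
    have "Suc (card B) = card A"
      unfolding B using A assms by (intro card_Suc_Diff1) (auto intro: finite_subset)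
    then show "B \<in> {A \<in> Pow S. i \<notin> A \<and> P (Suc (card A))}" using A B by auto
  qed
  show "insert i ` {A \<in> Pow S. i \<notin> A \<and> P (Suc (card A))} \<subseteq>
        {A \<in> Pow S. i \<in> A \<and> P (card A)}"
  proof
    fix B assume "B \<in> insert i ` {A \<in> Pow S. i \<notin> A \<and> P (Suc (card A))}"
    then obtain A where A: "A \<subseteq> S" "i \<notin> A" "P (Suc (card A))" and B: "B = insert i A" by auto
    have "card B = Suc (card A)" unfolding B using A finite_subset[OF A(1) assms(1)] by simp
    then show "B \<in> {A \<in> Pow S. i \<in> A \<and> P (card A)}" using A B assms by auto
  qed
qed auto

lemma bias_Pow:
  assumes "finite S" "i \<in> S"
  shows "bias (Pow S) i = 0"
  using card_Pow_containing[OF assms, of "\<lambda>_. True"] by (simp add: bias_def)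

lemma bias_large_subsets:
  assumes "finite S" "i \<in> S"
  shows "bias {A \<in> Pow S. h < card A} i = int ((card S - 1) choose h)"
proof -
  have "{A \<in> {A \<in> Pow S. h < card A}. i \<in> A} = {A \<in> Pow S. i \<in> A \<and> h < card A}" by auto
  then have "card {A \<in> {A \<in> Pow S. h < card A}. i \<in> A} =
      card {A \<in> Pow S. i \<notin> A \<and> h < Suc (card A)}"
    using card_Pow_containing[OF assms, of "\<lambda>c. h < c"] by simp
  also have "{A \<in> Pow S. i \<notin> A \<and> h < Suc (card A)} =
      {A \<in> {A \<in> Pow S. h < card A}. i \<notin> A} \<union> {A. A \<subseteq> S - {i} \<and> card A = h}"
    by auto
  also have "card \<dots> = card {A \<in> {A \<in> Pow S. h < card A}. i \<notin> A} + ((card S - 1) choose h)"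
    using assms by (subst card_Un_disjoint) (auto simp: n_subsets)
  finally show ?thesis unfolding bias_def by simp
qed

lemma card_large_subsets:
  assumes "finite S" "card S = 2 * h + 1"
  shows "2 * card {A \<in> Pow S. h < card A} = 2 ^ card S"
proof -
  let ?U = "{A \<in> Pow S. h < card A}" and ?L = "{A \<in> Pow S. card A \<le> h}"
  have "bij_betw (\<lambda>A. S - A) ?U ?L"
  proof (rule bij_betw_byWitness[where f' = "\<lambda>A. S - A"])
    show "(\<lambda>A. S - A) ` ?U \<subseteq> ?L" "(\<lambda>A. S - A) ` ?L \<subseteq> ?U"
      using assms by (auto simp: card_Diff_subset finite_subset)
  qed auto
  then have "card ?U = card ?L" by (rule bij_betw_same_card)
  moreover have "card ?U + card ?L = card (Pow S)"
    using assms(1) by (subst card_Un_disjoint[symmetric]) (auto intro: arg_cong[where f = card])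
  ultimately show ?thesis using assms(1) by (simp add: card_Pow)
qed

lemma bias_rotations:
  assumes "coprime k N" "R \<subseteq> zero_sum_subsets N k" "i < N"
  shows "bias (rotations N R) i = (2 * int k - int N) * int (card R)"
proof -
  have "finite R" using assms(2) by (rule finite_subset) (auto simp: zero_sum_subsets_def)
  then have "finite (rotations N R)" by (simp add: rotations_def)
  then show ?thesis
    using bias_eq_card[of "rotations N R" i] card_rotations[OF assms(1,2)] card_rotations_containing[OF assms]
    by (simp add: algebra_simps)
qed

lemma exists_balanced_family:
  assumes "coprime k N" "0 < N" "r \<le> card (zero_sum_subsets N k)"
  shows "\<exists>X \<subseteq> {A. A \<subseteq> {..<N} \<and> card A = k}.
           card X = N * r \<and> (\<forall>i<N. bias X i = (2 * int k - int N) * int r)"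
proof -
  obtain R where R: "R \<subseteq> zero_sum_subsets N k" "card R = r"
    using assms(3) by (meson obtain_subset_with_card_n)
  have "rotations N R \<subseteq> rotations N (zero_sum_subsets N k)"
    unfolding rotations_def using R(1) by auto
  then have "rotations N R \<subseteq> {A. A \<subseteq> {..<N} \<and> card A = k}"
    unfolding rotations_zero_sum_subsets[OF assms(1,2)] .
  then show ?thesis using card_rotations[OF assms(1) R(1)] bias_rotations[OF assms(1) R(1)] R(2) by auto
qed

lemma coprime_half_odd: "coprime h (2 * h + 1 :: nat)"
  by (metis coprime_Suc_right_nat coprime_mult_left_iff Suc_eq_plus1)

lemma exists_family_large_bias:
  fixes h N :: nat
  assumes N: "N = 2 * h + 1"
  shows "\<exists>F \<subseteq> Pow {..<N}. 2 ^ N + int (N choose h) - 1 \<le> 2 * int (card F) \<and>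
           (\<forall>i<N. int (N choose h) - 1 \<le> 2 * bias F i)"
proof -
  have cop: "coprime h N" and "0 < N" unfolding N using coprime_half_odd[of h] by simp_all
  define m where "m = card (zero_sum_subsets N h)"
  define r where "r = (m + 1) div 2"
  have c: "N choose h = N * m"
    unfolding m_def using binomial_eq_mult_card_zero_sum_subsets[OF cop \<open>0 < N\<close>] .
  have "N * ((N - 1) choose h) = N * ((h + 1) * m)"
    using binomial_absorb_comp[of N h] c N by (simp add: algebra_simps)
  then have avoid: "(N - 1) choose h = (h + 1) * m" using \<open>0 < N\<close> by simp
  have "r \<le> card (zero_sum_subsets N h)" unfolding r_def m_def by simp
  then obtain X where X: "X \<subseteq> {A. A \<subseteq> {..<N} \<and> card A = h}" "card X = N * r"
    and "\<forall>i<N. bias X i = (2 * int h - int N) * int r"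
    using exists_balanced_family[OF cop \<open>0 < N\<close>] by blast
  then have bias_X: "bias X i = - int r" if "i < N" for i using that N by simp
  define U where "U = {A \<in> Pow {..<N}. h < card A}"
  have fin: "finite U" "finite X" and disj: "U \<inter> X = {}"
    unfolding U_def using X(1) by (auto intro: finite_subset[of _ "Pow {..<N}"])
  have card_U: "2 * card U = 2 ^ N"
    unfolding U_def using card_large_subsets[of "{..<N}" h] N by simp
  have r: "m \<le> 2 * r" "2 * r \<le> m + 1" unfolding r_def by auto
  have "U \<union> X \<subseteq> Pow {..<N}" unfolding U_def using X(1) by auto
  moreover have "2 ^ N + int (N choose h) - 1 \<le> 2 * int (card (U \<union> X))"
  proof -
    have "2 ^ N + N * m \<le> 2 * card (U \<union> X)"
      using card_Un_disjoint[OF fin disj] card_U X(2) mult_le_mono2[OF r(1), of N] by simp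
    then have "int (2 ^ N + N * m) \<le> int (2 * card (U \<union> X))" by (simp only: of_nat_le_iff)
    then show ?thesis using c by simp
  qed
  moreover have "int (N choose h) - 1 \<le> 2 * bias (U \<union> X) i" if "i < N" for i
  proof -
    have "bias (U \<union> X) i = int ((h + 1) * m) - int r"
      using bias_Un[OF fin disj] bias_large_subsets[of "{..<N}" i h] bias_X[OF that] that avoid
      unfolding U_def by simp
    then show ?thesis using r(2) c N by (simp add: algebra_simps)
  qed
  ultimately show ?thesis by blast
qed

section \<open>Sign vectors and the shifted subset sums\<close>

definition sign_vector :: "nat \<Rightarrow> nat set \<Rightarrow> nat \<Rightarrow> int" where
  "sign_vector n A j = (if j = 0 then 1 else if j < n then (if j - 1 \<in> A then 1 else -1) else 0)"

lemma abs_sign_vector_le: "\<bar>sign_vector n A j\<bar> \<le> 1"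
  by (simp add: sign_vector_def)

lemma sum_sign_vector_0: "(\<Sum>A\<in>F. sign_vector n A 0) = int (card F)"
  by (simp add: sign_vector_def)

lemma sum_sign_vector_Suc:
  assumes "finite F" "Suc i < n"
  shows "(\<Sum>A\<in>F. sign_vector n A (Suc i)) = bias F i"
proof -
  have "(\<Sum>A\<in>F. sign_vector n A (Suc i)) = (\<Sum>A\<in>F. if i \<in> A then 1 else -1)"
    using assms(2) by (simp add: sign_vector_def)
  also have "\<dots> = bias F i"
    using assms(1) by (simp add: sum.If_cases bias_def Int_def)
  finally show ?thesis .
qed

lemma Vset_eq_sign_vectors:
  assumes "1 \<le> n"
  shows "Vset n = (\<lambda>A j. real_of_int (sign_vector n A j)) ` Pow {..<n - 1}"
proof
  show "(\<lambda>A j. real_of_int (sign_vector n A j)) ` Pow {..<n - 1} \<subseteq> Vset n"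
    using assms by (auto simp: Vset_def sign_vector_def split: if_splits)
next
  show "Vset n \<subseteq> (\<lambda>A j. real_of_int (sign_vector n A j)) ` Pow {..<n - 1}"
  proof
    fix v assume v: "v \<in> Vset n"
    have "v = (\<lambda>j. real_of_int (sign_vector n {i. Suc i < n \<and> v (Suc i) = 1} j))"
    proof
      fix j show "v j = real_of_int (sign_vector n {i. Suc i < n \<and> v (Suc i) = 1} j)"
        using v by (cases j) (auto simp: Vset_def sign_vector_def)
    qed
    then show "v \<in> (\<lambda>A j. real_of_int (sign_vector n A j)) ` Pow {..<n - 1}" by force
  qed
qed

lemma inj_on_sign_vector: "inj_on (\<lambda>A j. real_of_int (sign_vector n A j)) (Pow {..<n - 1})"
proof
  fix A B assume A: "A \<in> Pow {..<n - 1}" and B: "B \<in> Pow {..<n - 1}"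
    and eq: "(\<lambda>j. real_of_int (sign_vector n A j)) = (\<lambda>j. real_of_int (sign_vector n B j))"
  have "i \<in> A \<longleftrightarrow> i \<in> B" if "Suc i < n" for i
    using fun_cong[OF eq, of "Suc i"] that by (auto simp: sign_vector_def split: if_splits)
  then show "A = B" using A B by auto
qed

lemma sum_sign_vectors:
  assumes "G \<subseteq> Pow {..<n - 1}"
  shows "(\<Sum>v\<in>(\<lambda>A j. real_of_int (sign_vector n A j)) ` G. v j) =
         real_of_int (\<Sum>A\<in>G. sign_vector n A j)"
  using sum.reindex[OF inj_on_subset[OF inj_on_sign_vector assms]] by simp

lemma Pset_eq_sign_vector_sums:
  assumes "1 \<le> n"
  shows "Pset n = (\<lambda>G j. real_of_int (\<Sum>A\<in>G. sign_vector n A j)) ` Pow (Pow {..<n - 1})"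
proof -
  let ?vec = "\<lambda>A j. real_of_int (sign_vector n A j)"
  have "Pset n = (\<lambda>W j. \<Sum>v\<in>W. v j) ` Pow (Vset n)" unfolding Pset_def by blast
  also have "Pow (Vset n) = (`) ?vec ` Pow (Pow {..<n - 1})"
    unfolding Vset_eq_sign_vectors[OF assms] by (rule image_Pow_surj[symmetric]) (rule refl)
  finally show ?thesis unfolding image_image
    by (auto simp: sum_sign_vectors intro!: image_cong)
qed

lemma gV_eq_sign_vector_sum:
  assumes "1 \<le> n"
  shows "gV n j = real_of_int (\<Sum>A\<in>Pow {..<n - 1}. sign_vector n A j) / 2"
  unfolding gV_def Vset_eq_sign_vectors[OF assms] sum_sign_vectors[OF order_refl] by simp

lemma two_sum_le_sum_plus_card:
  fixes f :: "'a \<Rightarrow> int"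
  assumes "finite G" "F \<subseteq> G" "\<forall>x\<in>G. \<bar>f x\<bar> \<le> 1"
  shows "2 * sum f F \<le> sum f G + int (card G)"
proof -
  have "2 * sum f F \<le> (\<Sum>x\<in>F. f x + 1)"
    unfolding sum_distrib_left using assms(2,3) by (intro sum_mono) (auto simp: abs_le_iff)
  also have "\<dots> \<le> (\<Sum>x\<in>G. f x + 1)"
    using assms(1,2) by (rule sum_mono2) (use assms(2,3) in \<open>auto simp: abs_le_iff\<close>)
  finally show ?thesis by (simp add: sum.distrib)
qed

lemma shifted_witness:
  fixes n :: nat and F :: "nat set set"
  assumes n: "2 \<le> n" and F: "F \<subseteq> Pow {..<n - 1}"
    and size: "2 ^ (n - 1) + int ((n - 1) choose (n div 2)) - 1 \<le> 2 * int (card F)"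
    and bias: "\<And>i. i < n - 1 \<Longrightarrow> int ((n - 1) choose (n div 2)) - 1 \<le> 2 * bias F i"
  shows "\<exists>w. (\<forall>i<n. w i \<le> 1) \<and> (\<forall>i. n \<le> i \<longrightarrow> w i = 0) \<and>
           (\<lambda>_. 0) \<in> shifted n w \<and> shifted n w \<subseteq> KM n (Mval n)"
proof -
  define c where "c = int ((n - 1) choose (n div 2))"
  define P where "P = Pow {..<n - 1}"
  define s where "s G j = (\<Sum>A\<in>G. sign_vector n A j)" for G j
  \<comment> \<open>the unique \<open>w\<close> that makes the subset sum of \<open>F\<close> a zero of the shifted set\<close>
  define w where "w j = (if j < n then c + s P j - 2 * s F j else 0)" for j
  have n1: "1 \<le> n" using n by simp
  have "finite P" "finite F" using F by (auto simp: P_def intro: finite_subset)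
  have w_le: "w j \<le> 1" if "j < n" for j
  proof (cases j)
    case 0
    then show ?thesis
      using size \<open>finite P\<close> by (simp add: w_def s_def c_def sum_sign_vector_0 P_def card_Pow)
  next
    case (Suc i)
    then have "s P j = 0" "s F j = bias F i"
      using that \<open>finite F\<close> bias_Pow[of "{..<n - 1}" i]
      by (simp_all add: s_def P_def sum_sign_vector_Suc)
    moreover have "c - 1 \<le> 2 * bias F i" using bias[of i] that Suc by (simp add: c_def)
    ultimately show ?thesis using that by (simp add: w_def)
  qed
  have shifted: "shifted n w = (\<lambda>G j. if j < n then real_of_int (s G j - s F j) else 0) ` Pow P"
    unfolding shifted_def Pset_eq_sign_vector_sums[OF n1] image_image P_def
    by (rule image_cong[OF refl])
      (simp add: fun_eq_iff w_def s_def c_def P_def gV_eq_sign_vector_sum[OF n1] field_simps)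
  have zero: "(\<lambda>_. 0) \<in> shifted n w"
    unfolding shifted using F by (intro image_eqI[where x = F]) (auto simp: P_def)
  have card_P: "int (card P) = 2 ^ (n - 1)" by (simp add: P_def card_Pow)
  have Mval: "2 * Mval n = 2 ^ (n - 1) - real_of_int c + 1"
  proof -
    have "n - 1 = Suc (n - 2)" using n by simp
    then show ?thesis by (simp add: Mval_def c_def)
  qed
  have "shifted n w \<subseteq> KM n (Mval n)"
  proof (clarsimp simp: shifted KM_def)
    fix G j assume "G \<subseteq> P" "j < n"
    have "2 * s G j \<le> s P j + int (card P)"
      unfolding s_def using \<open>finite P\<close> \<open>G \<subseteq> P\<close>
      by (rule two_sum_le_sum_plus_card) (simp add: abs_sign_vector_le)
    moreover have "c + s P j - 2 * s F j \<le> 1"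
      using w_le[OF \<open>j < n\<close>] \<open>j < n\<close> by (simp add: w_def)
    ultimately have "2 * (s G j - s F j) \<le> 2 ^ (n - 1) - c + 1" using card_P by (simp add: algebra_simps)
    then have "real_of_int (2 * (s G j - s F j)) \<le> real_of_int (2 ^ (n - 1) - c + 1)"
      by (simp only: of_int_le_iff)
    then show "real_of_int (s G j) - real_of_int (s F j) \<le> Mval n" using Mval by simp
  qed
  then show ?thesis using w_le zero by (intro exI[of _ w]) (simp add: w_def)
qed

lemma shifted_witness_even:
  fixes n :: nat
  assumes "even n" "2 \<le> n"
  shows "\<exists>w. (\<forall>i<n. w i \<le> 1) \<and> (\<forall>i. n \<le> i \<longrightarrow> w i = 0) \<and>
           (\<lambda>_. 0) \<in> shifted n w \<and> shifted n w \<subseteq> KM n (Mval n)"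
proof -
  define h where "h = n div 2 - 1"
  have N: "n - 1 = 2 * h + 1" and half: "n div 2 = h + 1"
    using assms by (auto simp: h_def elim!: evenE)
  have "(n - 1) choose (n div 2) = (n - 1) choose h"
    unfolding N half by (subst binomial_symmetric) simp_all
  moreover obtain F where "F \<subseteq> Pow {..<n - 1}"
    and "2 ^ (n - 1) + int ((n - 1) choose h) - 1 \<le> 2 * int (card F)"
    and "\<forall>i<n - 1. int ((n - 1) choose h) - 1 \<le> 2 * bias F i"
    using exists_family_large_bias[OF N] by blast
  ultimately show ?thesis using assms(2) by (intro shifted_witness) auto
qed

theorem lemma4p5:
  fixes k n :: nat
  assumes "k \<ge> 1" and "n = 2 ^ k"
  shows "\<exists>w :: nat \<Rightarrow> int. (\<forall>i<n. w i \<le> 1) \<and> (\<forall>i. n \<le> i \<longrightarrow> w i = 0) \<and>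
           (\<lambda>_. 0) \<in> shifted n w \<and> shifted n w \<subseteq> KM n (Mval n)"
proof (rule shifted_witness_even)
  show "even n" using assms by simp
  have "2 ^ 1 \<le> (2::nat) ^ k" using assms(1) by (rule power_increasing) simp
  then show "2 \<le> n" using assms(2) by simp
qed

end
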